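(* Let $\mathcal{D}$ be a joint distribution of $(X, A, Y)$ with $A, Y \in \{0,1\}$ and $0 < \Pr_{\mathcal{D}}(A=0) < 1$. Let $g:\mathcal{X}\to\mathcal{Z}$ be a measurable encoder with $\mathcal{Z}\subseteq\mathbb{R}^{d}$ and $\sup_{z\in\mathcal{Z}}\|z\|\le R$, and let $Z=g(X)$. Let $\mathcal{F}_A$ be the set of all measurable functions $\mathcal{Z}\to\{0,1\}$. Define $\delta_{Y\mid A} := |\Pr_{\mathcal{D}_0}(Y=1) - \Pr_{\mathcal{D}_1}(Y=1)|$. Then for every measurable $h:\mathcal{Z}\to[0,1]$ with $\|h\|_L\le C$, $$\varepsilon_{Y\mid A=0}(h\circ g) + \varepsilon_{Y\mid A=1}(h\circ g) \;\ge\; \delta_{Y\mid A} - C\cdot W_1(g_\sharp\mathcal{D}_0, g_\sharp\mathcal{D}_1) \;\ge\; \delta_{Y\mid A} - 2RC\cdot \mathrm{Adv}_{\mathcal{D}}(\mathcal{F}_A).$$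
   Context: $\mathcal{D}_a$ denotes the conditional distribution of $\mathcal{D}$ given $A=a$. For a measurable map $g$, $g_\sharp\mathcal{D}$ is the pushforward $E'\mapsto \mathcal{D}(\{x: g(x)\in E'\})$; $g_\sharp\mathcal{D}_a$ is the law of $Z=g(X)$ given $A=a$. For distributions $P,P'$ on a metric space $\Omega$, $W_1(P,P') := \sup_{\|f\|_L\le 1}\left|\int f\,dP - \int f\,dP'\right|$, the supremum over real-valued $1$-Lipschitz functions, where $\|f\|_L$ is the Lipschitz constant ($\mathcal{Z}$ carries the Euclidean metric). The predictor $h(z)$ is interpreted as the predicted probability that $Y=1$, and the conditional cross-entropy error is $\varepsilon_{Y\mid A=a}(h\circ g) := \mathbb{E}_{\mathcal{D}}\big[-Y\ln h(g(X)) - (1-Y)\ln(1-h(g(X))) \,\big|\, A=a\big]$. The advantage of a class $\mathcal{F}_A$ of functions $\mathcal{Z}\to\{0,1\}$ is $\mathrm{Adv}_{\mathcal{D}}(\mathcal{F}_A) := \sup_{f\in\mathcal{F}_A}\left|\Pr_{\mathcal{D}_1}(f(Z)=1) - \Pr_{\mathcal{D}_0}(f(Z)=1)\right|$. *)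

theory Defs
  imports "HOL-Probability.Probability"
begin

definition cond_dist :: "'a measure \<Rightarrow> 'a set \<Rightarrow> 'a measure" where
  "cond_dist M S = density M (\<lambda>\<omega>. indicator S \<omega> / emeasure M S)"

definition xent :: "bool \<Rightarrow> real \<Rightarrow> ennreal" where
  "xent y p = (if y then (if p = 0 then \<infinity> else ennreal (- ln p))
               else (if p = 1 then \<infinity> else ennreal (- ln (1 - p))))"

text \<open>Wasserstein-1 distance between two measures on a common metric space
  (Kantorovich-Rubinstein dual form).\<close>
definition W1 :: "('z::metric_space) measure \<Rightarrow> 'z measure \<Rightarrow> real" where
  "W1 P Q = (SUP f \<in> {f. 1-lipschitz_on (space P) f}.
               \<bar>integral\<^sup>L P f - integral\<^sup>L Q f\<bar>)"

definition Adv :: "('z \<Rightarrow> bool) set \<Rightarrow> 'z measure \<Rightarrow> 'z measure \<Rightarrow> real" where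
  "Adv F P1 P0 = (SUP f \<in> F. \<bar>measure P1 {z \<in> space P1. f z} - measure P0 {z \<in> space P0. f z}\<bar>)"

end

theory Submission
  imports Defs
begin

text \<open>Since \<open>\<bar>[y] - p\<bar> \<le> -ln p\<close> for \<open>y\<close> and \<open>\<le> -ln (1 - p)\<close> otherwise, the cross-entropy error of
  each group dominates \<open>\<bar>Pr\<^sub>a(Y) - E\<^sub>a h(Z)\<bar>\<close>; the two expectations of the \<open>C\<close>-Lipschitz
  predictor differ by at most \<open>C\<cdot>W\<^sub>1\<close>, and the triangle inequality gives the first bound.
  For the second, a 1-Lipschitz \<open>f\<close> on the ball of radius \<open>R\<close> takes values in an interval of
  length \<open>2R\<close>; after rescaling to \<open>[0,1]\<close> its expectation is approximated to within \<open>1/n\<close> by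
  the staircase \<open>(1/n) \<Sum>\<^sub>k Pr(f \<ge> k/n)\<close>, and every superlevel set is a test in \<open>F\<^sub>A\<close>, so the
  two expectations of \<open>f\<close> differ by at most \<open>2R\<cdot>Adv\<close>.\<close>

lemma sum_indicator_le_eq_floor:
  fixes r :: real
  assumes "0 \<le> r" "r \<le> real n"
  shows "(\<Sum>k=1..n. if real k \<le> r then 1 else 0 :: real) = of_int \<lfloor>r\<rfloor>"
proof -
  have "{k\<in>{1..n}. real k \<le> r} = {1..nat \<lfloor>r\<rfloor>}"
    using assms by (auto simp: le_nat_floor le_nat_iff le_floor_iff)
  then show ?thesis
    using assms by (simp flip: sum.inter_filter)
qed

lemma (in prob_space) integral_staircase_approx:
  fixes u :: "'a \<Rightarrow> real"
  assumes u: "u \<in> borel_measurable M" and u01: "\<And>x. x \<in> space M \<Longrightarrow> 0 \<le> u x \<and> u x \<le> 1"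
    and n: "0 < n"
  shows "\<bar>expectation u - (\<Sum>k=1..n. prob {x\<in>space M. real k / real n \<le> u x}) / real n\<bar> \<le> 1 / real n"
proof -
  define S where "S k = {x\<in>space M. real k / real n \<le> u x}" for k :: nat
  define s where "s x = (\<Sum>k=1..n. indicator (S k) x) / real n" for x
  have S: "S k \<in> events" for k
    unfolding S_def using u by measurable
  have s_floor: "s x = of_int \<lfloor>real n * u x\<rfloor> / real n" if x: "x \<in> space M" for x
  proof -
    have "indicator (S k) x = (if real k \<le> real n * u x then 1 else 0 :: real)" for k
      using x n by (simp add: S_def indicator_def field_simps)
    moreover have "0 \<le> real n * u x" "real n * u x \<le> real n"
      using u01[OF x] by (simp_all add: mult_left_le)
    note sum_indicator_le_eq_floor[OF this]
    ultimately show ?thesis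
      by (simp add: s_def)
  qed
  have s_bounds: "0 \<le> s x \<and> s x \<le> u x \<and> u x - s x \<le> 1 / real n" if x: "x \<in> space M" for x
  proof -
    define v where "v = real n * u x"
    have "0 \<le> real_of_int \<lfloor>v\<rfloor>" "real_of_int \<lfloor>v\<rfloor> \<le> v" "v - real_of_int \<lfloor>v\<rfloor> \<le> 1"
      using u01[OF x] by (simp_all add: v_def) linarith
    moreover have "u x = v / real n"
      using n by (simp add: v_def)
    ultimately show ?thesis
      by (simp add: s_floor[OF x] divide_right_mono flip: v_def diff_divide_distrib)
  qed
  have s_meas: "s \<in> borel_measurable M"
    unfolding s_def using S by measurable
  have u_int: "integrable M u"
    using u u01 by (intro integrable_const_bound[where B=1]) auto
  have s_int: "integrable M s"
    using s_meas s_bounds u01 by (intro integrable_const_bound[where B=1] AE_I2) fastforce+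
  have "\<bar>expectation u - expectation s\<bar> = \<bar>expectation (\<lambda>x. u x - s x)\<bar>"
    using u_int s_int by simp
  also have "\<dots> \<le> expectation (\<lambda>x. \<bar>u x - s x\<bar>)"
    by (rule integral_abs_bound)
  also have "\<dots> \<le> 1 / real n"
    using u_int s_int s_bounds by (intro integral_le_const AE_I2) auto
  finally have "\<bar>expectation u - expectation s\<bar> \<le> 1 / real n" .
  moreover have "expectation s = (\<Sum>k=1..n. prob (S k)) / real n"
  proof -
    have "expectation (\<lambda>x. \<Sum>k=1..n. indicator (S k) x) = (\<Sum>k=1..n. prob (S k))"
      using S by (subst Bochner_Integration.integral_sum) (auto simp: less_top[symmetric])
    then show ?thesis
      unfolding s_def by (simp only: integral_divide_zero)
  qed
  ultimately show ?thesis
    by (simp add: S_def)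
qed

lemma abs_integral_diff_le_superlevel_bound:
  fixes u :: "'a \<Rightarrow> real"
  assumes P: "prob_space P" and Q: "prob_space Q" and sets_eq: "sets P = sets Q"
    and u: "u \<in> borel_measurable P" and u01: "\<And>x. x \<in> space P \<Longrightarrow> 0 \<le> u x \<and> u x \<le> 1"
    and a: "\<And>t. \<bar>measure P {x\<in>space P. t \<le> u x} - measure Q {x\<in>space Q. t \<le> u x}\<bar> \<le> a"
  shows "\<bar>integral\<^sup>L P u - integral\<^sup>L Q u\<bar> \<le> a"
proof (rule field_le_epsilon)
  fix e :: real
  assume "0 < e"
  then obtain n :: nat where n: "0 < n" "inverse (real n) < e / 2"
    using ex_inverse_of_nat_less[of "e / 2"] by auto
  have space_eq: "space Q = space P"
    using sets_eq_imp_space_eq[OF sets_eq] by simp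
  define level where "level k = {x\<in>space P. real k / real n \<le> u x}" for k :: nat
  define sP where "sP = (\<Sum>k=1..n. measure P (level k))"
  define sQ where "sQ = (\<Sum>k=1..n. measure Q (level k))"
  have uQ: "u \<in> borel_measurable Q"
    using u measurable_cong_sets[OF sets_eq refl] by blast
  have u01Q: "0 \<le> u x \<and> u x \<le> 1" if "x \<in> space Q" for x
    using u01 that space_eq by simp
  have "\<bar>integral\<^sup>L P u - sP / real n\<bar> \<le> 1 / real n"
    unfolding sP_def level_def by (rule prob_space.integral_staircase_approx[OF P u u01 n(1)])
  moreover have "\<bar>integral\<^sup>L Q u - sQ / real n\<bar> \<le> 1 / real n"
    unfolding sQ_def level_def space_eq[symmetric]
    by (rule prob_space.integral_staircase_approx[OF Q uQ u01Q n(1)])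
  moreover have "\<bar>sP - sQ\<bar> \<le> real n * a"
  proof -
    have "\<bar>sP - sQ\<bar> \<le> (\<Sum>k=1..n. \<bar>measure P (level k) - measure Q (level k)\<bar>)"
      unfolding sP_def sQ_def by (simp add: sum_abs flip: sum_subtractf)
    also have "\<dots> \<le> real n * a"
    proof (rule order_trans[OF sum_bounded_above])
      show "\<bar>measure P (level k) - measure Q (level k)\<bar> \<le> a" for k
        using a[of "real k / real n"] space_eq by (simp add: level_def)
    qed simp
    finally show ?thesis .
  qed
  then have "\<bar>sP / real n - sQ / real n\<bar> \<le> a"
    using n by (simp add: abs_divide pos_divide_le_eq mult.commute flip: diff_divide_distrib)
  ultimately show "\<bar>integral\<^sup>L P u - integral\<^sup>L Q u\<bar> \<le> a + e"
    using n(2) unfolding inverse_eq_divide by linarith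
qed

lemma abs_measure_diff_le_Adv:
  assumes "prob_space P" "prob_space Q" "f \<in> F"
  shows "\<bar>measure P {z\<in>space P. f z} - measure Q {z\<in>space Q. f z}\<bar> \<le> Adv F P Q"
  unfolding Adv_def
proof (rule cSUP_upper[OF assms(3)])
  interpret P: prob_space P by fact
  interpret Q: prob_space Q by fact
  have "\<bar>measure P {z\<in>space P. f z} - measure Q {z\<in>space Q. f z}\<bar> \<le> 1" for f
    using P.prob_le_1[of "{z\<in>space P. f z}"] Q.prob_le_1[of "{z\<in>space Q. f z}"]
      measure_nonneg[of P "{z\<in>space P. f z}"] measure_nonneg[of Q "{z\<in>space Q. f z}"]
    by linarith
  then show "bdd_above ((\<lambda>f. \<bar>measure P {z\<in>space P. f z} - measure Q {z\<in>space Q. f z}\<bar>) ` F)"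
    by (intro bdd_aboveI[where M=1]) auto
qed

lemma (in prob_space) expectation_eq_const:
  fixes f :: "'a \<Rightarrow> real"
  assumes "\<And>x. x \<in> space M \<Longrightarrow> f x = c"
  shows "expectation f = c"
proof -
  have "expectation f = expectation (\<lambda>_. c)"
    by (rule Bochner_Integration.integral_cong) (simp_all add: assms)
  then show ?thesis
    by (simp add: prob_space)
qed

lemma abs_integral_diff_le_Adv_if_lipschitz:
  fixes P Q :: "'z::real_normed_vector measure" and f :: "'z \<Rightarrow> real"
  assumes P: "prob_space P" and Q: "prob_space Q"
    and sP: "sets P = sets (restrict_space borel Zs)" and sQ: "sets Q = sets (restrict_space borel Zs)"
    and R: "\<forall>z\<in>Zs. norm z \<le> R" and f: "1-lipschitz_on Zs f"
  shows "\<bar>integral\<^sup>L P f - integral\<^sup>L Q f\<bar>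
    \<le> 2 * R * Adv {t :: 'z \<Rightarrow> bool. t \<in> measurable (restrict_space borel Zs) (count_space UNIV)} P Q"
    (is "_ \<le> 2 * R * Adv ?F P Q")
proof -
  interpret P: prob_space P by (rule P)
  interpret Q: prob_space Q by (rule Q)
  have spP: "space P = Zs" and spQ: "space Q = Zs"
    using sets_eq_imp_space_eq[OF sP] sets_eq_imp_space_eq[OF sQ] by (simp_all add: space_restrict_space)
  obtain z0 where z0: "z0 \<in> Zs"
    using P.not_empty spP by auto
  have osc: "f z \<le> f w + 2 * R" if "z \<in> Zs" "w \<in> Zs" for z w
  proof -
    have "f z - f w \<le> 1 * dist z w"
      using lipschitz_onD[OF f that] by (simp add: dist_real_def)
    also have "\<dots> \<le> norm z + norm w"
      by (simp add: dist_norm norm_triangle_ineq4)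
    moreover have "norm z \<le> R" "norm w \<le> R"
      using R that by simp_all
    ultimately show ?thesis
      by linarith
  qed
  define m where "m = Inf (f ` Zs)"
  have f_range: "m \<le> f z \<and> f z \<le> m + 2 * R" if "z \<in> Zs" for z
  proof
    have "bdd_below (f ` Zs)"
      using osc[OF z0] by (intro bdd_belowI[where m="f z0 - 2 * R"]) fastforce
    then show "m \<le> f z"
      unfolding m_def using that by (simp add: cInf_lower)
    have "f z - 2 * R \<le> m"
      unfolding m_def using osc[OF that] z0 by (intro cInf_greatest) fastforce+
    then show "f z \<le> m + 2 * R"
      by simp
  qed
  have f_meas: "f \<in> borel_measurable (restrict_space borel Zs)"
    by (rule borel_measurable_continuous_on_restrict[OF lipschitz_on_continuous_on[OF f]])
  show ?thesis
  proof (cases "R = 0")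
    case True
    then have f_const: "f z = m" if "z \<in> Zs" for z
      using f_range[OF that] by simp
    have "integral\<^sup>L P f = m" "integral\<^sup>L Q f = m"
      using f_const by (auto intro: P.expectation_eq_const Q.expectation_eq_const simp: spP spQ)
    then show ?thesis
      using True by simp
  next
    case False
    moreover have "norm z0 \<le> R"
      using R z0 by simp
    ultimately have "0 < R"
      using norm_ge_zero[of z0] by linarith
    define u where "u z = (f z - m) / (2 * R)" for z
    have u_meas: "u \<in> borel_measurable (restrict_space borel Zs)"
      unfolding u_def using f_meas by measurable
    have u01: "0 \<le> u z \<and> u z \<le> 1" if "z \<in> Zs" for z
      using f_range[OF that] \<open>0 < R\<close> by (simp add: u_def field_simps)
    have "\<bar>integral\<^sup>L P u - integral\<^sup>L Q u\<bar> \<le> Adv ?F P Q"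
    proof (rule abs_integral_diff_le_superlevel_bound[OF P Q])
      show "\<bar>measure P {z\<in>space P. t \<le> u z} - measure Q {z\<in>space Q. t \<le> u z}\<bar> \<le> Adv ?F P Q" for t
        using u_meas by (intro abs_measure_diff_le_Adv[OF P Q]) simp
    qed (use sP sQ u_meas u01 spP in \<open>simp_all add: measurable_cong_sets[OF sP refl]\<close>)
    moreover have affine: "integral\<^sup>L N f = m + 2 * R * integral\<^sup>L N u"
      if N: "prob_space N" "sets N = sets (restrict_space borel Zs)" for N
    proof -
      interpret N: prob_space N by (rule N(1))
      have space_N: "space N = Zs"
        using sets_eq_imp_space_eq[OF N(2)] by (simp add: space_restrict_space)
      have "integrable N u"
        using u_meas u01 N(2) space_N
        by (intro N.integrable_const_bound[where B=1]) (auto simp: measurable_cong_sets[OF N(2) refl])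
      have "integral\<^sup>L N f = integral\<^sup>L N (\<lambda>z. m + 2 * R * u z)"
        using \<open>0 < R\<close> by (intro Bochner_Integration.integral_cong) (simp_all add: u_def space_N)
      also have "\<dots> = m + 2 * R * integral\<^sup>L N u"
        using \<open>integrable N u\<close> by (simp add: N.prob_space)
      finally show ?thesis .
    qed
    ultimately show ?thesis
      using \<open>0 < R\<close> by (simp add: affine[OF P sP] affine[OF Q sQ] abs_mult flip: right_diff_distrib)
  qed
qed

text \<open>The radius bound is only needed to make the supremum defining \<open>W1\<close> bounded, without which
  the real-valued \<open>SUP\<close> is an unspecified value.\<close>

lemma abs_integral_diff_le_W1_if_lipschitz:
  fixes P Q :: "'z::real_normed_vector measure" and f :: "'z \<Rightarrow> real"
  assumes P: "prob_space P" and Q: "prob_space Q"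
    and sP: "sets P = sets (restrict_space borel Zs)" and sQ: "sets Q = sets (restrict_space borel Zs)"
    and R: "\<forall>z\<in>Zs. norm z \<le> R" and f: "1-lipschitz_on Zs f"
  shows "\<bar>integral\<^sup>L P f - integral\<^sup>L Q f\<bar> \<le> W1 P Q"
proof -
  have space_P: "space P = Zs"
    using sets_eq_imp_space_eq[OF sP] by (simp add: space_restrict_space)
  obtain B where "\<And>f :: 'z \<Rightarrow> real. 1-lipschitz_on Zs f \<Longrightarrow> \<bar>integral\<^sup>L P f - integral\<^sup>L Q f\<bar> \<le> B"
    using abs_integral_diff_le_Adv_if_lipschitz[OF P Q sP sQ R] by blast
  then have "bdd_above ((\<lambda>f. \<bar>integral\<^sup>L P f - integral\<^sup>L Q f\<bar>) ` {f :: 'z \<Rightarrow> real. 1-lipschitz_on (space P) f})"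
    by (intro bdd_aboveI2[where M=B]) (simp add: space_P)
  then show ?thesis
    unfolding W1_def using f space_P by (intro cSUP_upper) simp_all
qed

lemma W1_le_Adv:
  fixes P Q :: "'z::real_normed_vector measure"
  assumes P: "prob_space P" and Q: "prob_space Q"
    and sP: "sets P = sets (restrict_space borel Zs)" and sQ: "sets Q = sets (restrict_space borel Zs)"
    and R: "\<forall>z\<in>Zs. norm z \<le> R"
  shows "W1 P Q
    \<le> 2 * R * Adv {t :: 'z \<Rightarrow> bool. t \<in> measurable (restrict_space borel Zs) (count_space UNIV)} Q P"
proof -
  have space_P: "space P = Zs"
    using sets_eq_imp_space_eq[OF sP] by (simp add: space_restrict_space)
  have "(\<lambda>_. 0) \<in> {f :: 'z \<Rightarrow> real. 1-lipschitz_on (space P) f}"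
    by (simp add: lipschitz_on_def)
  then show ?thesis
    unfolding W1_def using abs_integral_diff_le_Adv_if_lipschitz[OF Q P sQ sP R]
    by (intro cSUP_least) (auto simp: space_P abs_minus_commute)
qed

lemma abs_integral_diff_le_W1:
  fixes P Q :: "'z::real_normed_vector measure" and h :: "'z \<Rightarrow> real"
  assumes P: "prob_space P" and Q: "prob_space Q"
    and sP: "sets P = sets (restrict_space borel Zs)" and sQ: "sets Q = sets (restrict_space borel Zs)"
    and R: "\<forall>z\<in>Zs. norm z \<le> R" and h: "C-lipschitz_on Zs h"
  shows "\<bar>integral\<^sup>L P h - integral\<^sup>L Q h\<bar> \<le> C * W1 P Q"
proof (cases "C = 0")
  case True
  interpret P: prob_space P by (rule P)
  interpret Q: prob_space Q by (rule Q)
  have space: "space P = Zs" "space Q = Zs"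
    using sets_eq_imp_space_eq[OF sP] sets_eq_imp_space_eq[OF sQ] by (simp_all add: space_restrict_space)
  obtain z0 where z0: "z0 \<in> Zs"
    using P.not_empty space by auto
  have "h z = h z0" if "z \<in> Zs" for z
    using lipschitz_onD[OF h that z0] True by simp
  then have "integral\<^sup>L P h = h z0" "integral\<^sup>L Q h = h z0"
    by (auto intro: P.expectation_eq_const Q.expectation_eq_const simp: space)
  then show ?thesis
    using True by simp
next
  case False
  then have "0 < C"
    using lipschitz_on_nonneg[OF h] by simp
  have "1-lipschitz_on Zs (\<lambda>z. h z / C)"
  proof (rule lipschitz_onI)
    fix x y assume "x \<in> Zs" "y \<in> Zs"
    then have "\<bar>h x - h y\<bar> \<le> C * dist x y"
      using lipschitz_onD[OF h] by (simp add: dist_real_def)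
    then show "dist (h x / C) (h y / C) \<le> 1 * dist x y"
      using \<open>0 < C\<close> by (simp add: dist_real_def abs_divide pos_divide_le_eq mult.commute flip: diff_divide_distrib)
  qed simp
  from abs_integral_diff_le_W1_if_lipschitz[OF P Q sP sQ R this]
  have "\<bar>integral\<^sup>L P h - integral\<^sup>L Q h\<bar> / C \<le> W1 P Q"
    using \<open>0 < C\<close> by (simp add: abs_divide flip: diff_divide_distrib)
  then show ?thesis
    using \<open>0 < C\<close> by (simp add: pos_divide_le_eq mult.commute)
qed

lemma abs_label_diff_le_xent:
  assumes "0 \<le> p" "p \<le> 1"
  shows "ennreal \<bar>(if y then 1 else 0) - p\<bar> \<le> xent y p"
proof (cases y)
  case True
  show ?thesis
  proof (cases "p = 0")
    case False
    then have "ln p \<le> p - 1"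
      using assms by (intro ln_le_minus_one) simp
    then show ?thesis
      using True False assms by (auto simp: xent_def intro!: ennreal_leI)
  qed (simp add: xent_def True)
next
  case False
  show ?thesis
  proof (cases "p = 1")
    case p_ne_1: False
    then have "ln (1 - p) \<le> (1 - p) - 1"
      using assms by (intro ln_le_minus_one) simp
    then show ?thesis
      using False p_ne_1 assms by (auto simp: xent_def intro!: ennreal_leI)
  qed (simp add: xent_def False)
qed

lemma (in prob_space) abs_prob_diff_expectation_le_xent:
  fixes Y :: "'a \<Rightarrow> bool" and q :: "'a \<Rightarrow> real"
  assumes Y: "Y \<in> measurable M (count_space UNIV)" and q: "q \<in> borel_measurable M"
    and q01: "\<And>\<omega>. \<omega> \<in> space M \<Longrightarrow> 0 \<le> q \<omega> \<and> q \<omega> \<le> 1"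
  shows "ennreal \<bar>prob {\<omega>\<in>space M. Y \<omega>} - expectation q\<bar> \<le> (\<integral>\<^sup>+ \<omega>. xent (Y \<omega>) (q \<omega>) \<partial>M)"
proof -
  define y where "y \<omega> = (if Y \<omega> then 1 else 0 :: real)" for \<omega>
  have y_int: "integrable M y"
    unfolding y_def using Y by (intro integrable_const_bound[where B=1]) auto
  have q_int: "integrable M q"
    using q q01 by (intro integrable_const_bound[where B=1]) auto
  have "prob {\<omega>\<in>space M. Y \<omega>} = expectation (indicator {\<omega>\<in>space M. Y \<omega>})"
    by (simp add: Int_absorb2 subset_iff)
  also have "\<dots> = expectation y"
    by (rule Bochner_Integration.integral_cong) (auto simp: y_def indicator_def)
  finally have "\<bar>prob {\<omega>\<in>space M. Y \<omega>} - expectation q\<bar> = \<bar>expectation (\<lambda>\<omega>. y \<omega> - q \<omega>)\<bar>"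
    using y_int q_int by simp
  also have "\<dots> \<le> expectation (\<lambda>\<omega>. \<bar>y \<omega> - q \<omega>\<bar>)"
    by (rule integral_abs_bound)
  finally have "ennreal \<bar>prob {\<omega>\<in>space M. Y \<omega>} - expectation q\<bar> \<le> ennreal (expectation (\<lambda>\<omega>. \<bar>y \<omega> - q \<omega>\<bar>))"
    by (rule ennreal_leI)
  also have "\<dots> = (\<integral>\<^sup>+ \<omega>. ennreal \<bar>y \<omega> - q \<omega>\<bar> \<partial>M)"
    using y_int q_int by (simp add: nn_integral_eq_integral)
  also have "\<dots> \<le> (\<integral>\<^sup>+ \<omega>. xent (Y \<omega>) (q \<omega>) \<partial>M)"
    using q01 abs_label_diff_le_xent by (intro nn_integral_mono) (auto simp: y_def)
  finally show ?thesis .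
qed

lemma ereal_add_le_enn2ereal_add:
  fixes x y :: real
  assumes "ennreal x \<le> a" "ennreal y \<le> b" "0 \<le> x" "0 \<le> y"
  shows "ereal (x + y) \<le> enn2ereal (a + b)"
proof -
  have "ereal (x + y) = enn2ereal (ennreal x + ennreal y)"
    using assms(3,4) by (simp flip: ennreal_plus)
  also have "\<dots> \<le> enn2ereal (a + b)"
    using add_mono[OF assms(1,2)] by (simp add: less_eq_ennreal.rep_eq)
  finally show ?thesis .
qed

lemma xent_errors_ge_label_gap_minus_W1:
  fixes D :: "bool \<Rightarrow> 'w measure" and Y :: "'w \<Rightarrow> bool"
    and \<phi> :: "'w \<Rightarrow> 'z::real_normed_vector" and h :: "'z \<Rightarrow> real"
  assumes D: "\<And>a. prob_space (D a)"
    and Y: "\<And>a. Y \<in> measurable (D a) (count_space UNIV)"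
    and \<phi>: "\<And>a. \<phi> \<in> measurable (D a) (restrict_space borel Zs)"
    and R: "\<forall>z\<in>Zs. norm z \<le> R"
    and h: "h \<in> borel_measurable (restrict_space borel Zs)"
    and h01: "\<forall>z\<in>Zs. 0 \<le> h z \<and> h z \<le> 1" and h_lip: "C-lipschitz_on Zs h"
  shows "ereal (\<bar>measure (D False) {\<omega>\<in>space (D False). Y \<omega>} - measure (D True) {\<omega>\<in>space (D True). Y \<omega>}\<bar>
      - C * W1 (distr (D False) (restrict_space borel Zs) \<phi>) (distr (D True) (restrict_space borel Zs) \<phi>))
    \<le> enn2ereal ((\<integral>\<^sup>+ \<omega>. xent (Y \<omega>) (h (\<phi> \<omega>)) \<partial>D False) + (\<integral>\<^sup>+ \<omega>. xent (Y \<omega>) (h (\<phi> \<omega>)) \<partial>D True))"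
proof -
  define Zd where "Zd a = distr (D a) (restrict_space borel Zs) \<phi>" for a
  define p where "p a = measure (D a) {\<omega>\<in>space (D a). Y \<omega>}" for a
  define e where "e a = integral\<^sup>L (Zd a) h" for a
  have err: "ennreal \<bar>p a - e a\<bar> \<le> (\<integral>\<^sup>+ \<omega>. xent (Y \<omega>) (h (\<phi> \<omega>)) \<partial>D a)" for a
  proof -
    have "\<phi> \<omega> \<in> Zs" if "\<omega> \<in> space (D a)" for \<omega>
      using measurable_space[OF \<phi> that] by (simp add: space_restrict_space)
    then show ?thesis
      unfolding p_def e_def Zd_def integral_distr[OF \<phi> h] using h01
      by (intro prob_space.abs_prob_diff_expectation_le_xent[OF D Y] measurable_compose[OF \<phi> h]) simp
  qed
  have Zd_prob: "prob_space (Zd a)" and Zd_sets: "sets (Zd a) = sets (restrict_space borel Zs)" for a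
    unfolding Zd_def using prob_space.prob_space_distr[OF D \<phi>] by simp_all
  have "\<bar>e False - e True\<bar> \<le> C * W1 (Zd False) (Zd True)"
    unfolding e_def by (rule abs_integral_diff_le_W1[OF Zd_prob Zd_prob Zd_sets Zd_sets R h_lip])
  then have "ereal (\<bar>p False - p True\<bar> - C * W1 (Zd False) (Zd True))
      \<le> ereal (\<bar>p False - e False\<bar> + \<bar>p True - e True\<bar>)"
    by simp
  also have "\<dots> \<le> enn2ereal ((\<integral>\<^sup>+ \<omega>. xent (Y \<omega>) (h (\<phi> \<omega>)) \<partial>D False) + (\<integral>\<^sup>+ \<omega>. xent (Y \<omega>) (h (\<phi> \<omega>)) \<partial>D True))"
    using err by (intro ereal_add_le_enn2ereal_add) simp_all
  finally show ?thesis
    unfolding p_def Zd_def .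
qed

lemma (in prob_space) prob_space_cond_dist:
  assumes "S \<in> events" "0 < prob S"
  shows "prob_space (cond_dist M S)"
  unfolding cond_dist_def using assms
  by (intro prob_space_uniform_measure[unfolded uniform_measure_def]) (auto simp: emeasure_eq_measure)

lemma (in prob_space) prob_space_cond_dist_bool:
  assumes A: "A \<in> measurable M (count_space UNIV)"
    and "0 < prob {\<omega> \<in> space M. \<not> A \<omega>}" "prob {\<omega> \<in> space M. \<not> A \<omega>} < 1"
  shows "prob_space (cond_dist M {\<omega> \<in> space M. A \<omega> = a})"
proof (rule prob_space_cond_dist)
  show event: "{\<omega> \<in> space M. A \<omega> = a} \<in> events" for a
    using A by measurable
  show "0 < prob {\<omega> \<in> space M. A \<omega> = a}"
  proof (cases a)
    case True
    then have "{\<omega> \<in> space M. A \<omega> = a} = space M - {\<omega> \<in> space M. A \<omega> = False}"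
      by auto
    then show ?thesis
      using prob_compl[OF event[of False]] assms(3) by simp
  qed (use assms(2) in simp)
qed

theorem theorem1:
  fixes M :: "'w measure" and SX :: "'x measure"
    and X :: "'w \<Rightarrow> 'x" and A Y :: "'w \<Rightarrow> bool"
    and g :: "'x \<Rightarrow> 'z::euclidean_space" and Zs :: "'z set"
    and R C :: real and h :: "'z \<Rightarrow> real"
  assumes "prob_space M"
    and "X \<in> measurable M SX"
    and "A \<in> measurable M (count_space UNIV)"
    and "Y \<in> measurable M (count_space UNIV)"
    and "0 < measure M {\<omega> \<in> space M. \<not> A \<omega>}"
    and "measure M {\<omega> \<in> space M. \<not> A \<omega>} < 1"
    and "g \<in> measurable SX (restrict_space borel Zs)"
    and "\<forall>z \<in> Zs. norm z \<le> R"
    and "h \<in> borel_measurable (restrict_space borel Zs)"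
    and "\<forall>z \<in> Zs. 0 \<le> h z \<and> h z \<le> 1"
    and "C-lipschitz_on Zs h"
  shows "let D = (\<lambda>a. cond_dist M {\<omega> \<in> space M. A \<omega> = a});
             Zd = (\<lambda>a. distr (D a) (restrict_space borel Zs) (\<lambda>\<omega>. g (X \<omega>)));
             err = (\<lambda>a. \<integral>\<^sup>+ \<omega>. xent (Y \<omega>) (h (g (X \<omega>))) \<partial>(D a));
             \<delta> = \<bar>measure (D False) {\<omega> \<in> space M. Y \<omega>} - measure (D True) {\<omega> \<in> space M. Y \<omega>}\<bar>;
             FA = {f :: 'z \<Rightarrow> bool. f \<in> measurable (restrict_space borel Zs) (count_space UNIV)}
         in ereal (\<delta> - C * W1 (Zd False) (Zd True)) \<le> enn2ereal (err False + err True)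
            \<and> \<delta> - C * W1 (Zd False) (Zd True) \<ge> \<delta> - 2 * R * C * Adv FA (Zd True) (Zd False)"
proof -
  interpret M: prob_space M by fact
  define D where "D a = cond_dist M {\<omega> \<in> space M. A \<omega> = a}" for a
  define Zd where "Zd a = distr (D a) (restrict_space borel Zs) (\<lambda>\<omega>. g (X \<omega>))" for a
  have D: "prob_space (D a)" for a
    unfolding D_def using assms(3,5,6) by (rule M.prob_space_cond_dist_bool)
  have sets_D: "sets (D a) = sets M" for a
    by (simp add: D_def cond_dist_def)
  have enc: "(\<lambda>\<omega>. g (X \<omega>)) \<in> measurable (D a) (restrict_space borel Zs)" for a
    using measurable_compose[OF assms(2,7)] by (simp add: measurable_cong_sets[OF sets_D refl])
  have "ereal (\<bar>measure (D False) {\<omega>\<in>space M. Y \<omega>} - measure (D True) {\<omega>\<in>space M. Y \<omega>}\<bar>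
      - C * W1 (Zd False) (Zd True))
    \<le> enn2ereal ((\<integral>\<^sup>+ \<omega>. xent (Y \<omega>) (h (g (X \<omega>))) \<partial>D False) + (\<integral>\<^sup>+ \<omega>. xent (Y \<omega>) (h (g (X \<omega>))) \<partial>D True))"
    using xent_errors_ge_label_gap_minus_W1[OF D _ enc assms(8-11), of Y] assms(4)
    by (simp add: Zd_def sets_eq_imp_space_eq[OF sets_D] measurable_cong_sets[OF sets_D refl])
  moreover have "C * W1 (Zd False) (Zd True)
      \<le> C * (2 * R * Adv {f. f \<in> measurable (restrict_space borel Zs) (count_space UNIV)} (Zd True) (Zd False))"
    using W1_le_Adv[OF prob_space.prob_space_distr[OF D enc] prob_space.prob_space_distr[OF D enc] _ _ assms(8)]
      lipschitz_on_nonneg[OF assms(11)]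
    by (intro mult_left_mono) (simp_all add: Zd_def)
  ultimately show ?thesis
    unfolding Let_def D_def Zd_def by (simp add: algebra_simps)
qed

end
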